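(* For any Loomis-Whitney query $Q$, $\mathsf{w}(\widehat Q)=\frac32$, where $\widehat Q$ is the multivariate extension of $Q$.
   Context: A Loomis-Whitney query of degree $k\ge3$ has variables $X_1,\dots,X_k$ and $k$ atoms $R_1,\dots,R_k$, where the schema of $R_i$ consists of all variables except $X_i$ (e.g., the triangle query $R(A,B)\wedge S(B,C)\wedge T(A,C)$ for $k=3$). Multivariate extension of $Q=R_1(\mathbf X_1)\wedge\cdots\wedge R_k(\mathbf X_k)$: take fresh variables $Z_1,\dots,Z_k$. For a permutation $\sigma$ of $[k]$, the component $\widehat Q_\sigma$ replaces each atom $R_{\sigma_i}(\mathbf X_{\sigma_i})$ by $\widehat R_{\sigma_i}(Z_1,\dots,Z_i,\mathbf X_{\sigma_i})$; $\widehat Q$ is the union of all components. Fractional hypertree width $\mathsf{w}(P)$ of a query $P$: minimum over tree decompositions of $P$ (trees with bags of variables covering every atom schema, the bags containing any variable forming a connected subtree) of the maximum over bags $B$ of the fractional edge cover number of $P$ restricted to $B$ (each atom schema intersected with $B$). For a union of queries, $\mathsf{w}$ is the maximum over the queries. *)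

theory Defs
  imports Complex_Main "HOL-Combinatorics.Permutations"
begin

text \<open>A conjunctive query is represented by the list of its atom schemas
(sets of variables). Relation names play no role in the fractional hypertree width.\<close>

type_synonym 'v query = "'v set list"

definition qvars :: "'v query \<Rightarrow> 'v set" where
  "qvars P = \<Union> (set P)"

definition adj_in :: "('n \<times> 'n) set \<Rightarrow> 'n set \<Rightarrow> ('n \<times> 'n) set" where
  "adj_in E S = {(a, b). a \<in> S \<and> b \<in> S \<and> ((a, b) \<in> E \<or> (b, a) \<in> E)}"

definition connected_in :: "('n \<times> 'n) set \<Rightarrow> 'n set \<Rightarrow> bool" where
  "connected_in E S \<longleftrightarrow> (\<forall>a\<in>S. \<forall>b\<in>S. (a, b) \<in> (adj_in E S)\<^sup>*)"

text \<open>An (undirected) tree on node set N with edges E (given as ordered pairs,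
read as undirected edges): finite, nonempty, connected, loop-free, and with
exactly |N|-1 undirected edges.\<close>

definition is_tree :: "'n set \<Rightarrow> ('n \<times> 'n) set \<Rightarrow> bool" where
  "is_tree N E \<longleftrightarrow> finite N \<and> N \<noteq> {} \<and> E \<subseteq> N \<times> N \<and> (\<forall>(a, b)\<in>E. a \<noteq> b)
     \<and> connected_in E N \<and> card {{a, b} | a b. (a, b) \<in> E} = card N - 1"

definition is_tree_decomp ::
  "'v query \<Rightarrow> nat set \<Rightarrow> (nat \<times> nat) set \<Rightarrow> (nat \<Rightarrow> 'v set) \<Rightarrow> bool" where
  "is_tree_decomp P N E B \<longleftrightarrow> is_tree N E
     \<and> (\<forall>t\<in>N. B t \<subseteq> qvars P)
     \<and> (\<forall>e\<in>set P. \<exists>t\<in>N. e \<subseteq> B t)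
     \<and> (\<forall>x. connected_in E {t \<in> N. x \<in> B t})"

definition frac_edge_cover :: "'v query \<Rightarrow> 'v set \<Rightarrow> real" where
  "frac_edge_cover P S = Inf {(\<Sum>i<length P. w i) | w :: nat \<Rightarrow> real.
      (\<forall>i<length P. 0 \<le> w i) \<and>
      (\<forall>x\<in>S. 1 \<le> (\<Sum>i\<in>{i. i < length P \<and> x \<in> P ! i \<inter> S}. w i))}"

definition td_width :: "'v query \<Rightarrow> nat set \<Rightarrow> (nat \<Rightarrow> 'v set) \<Rightarrow> real" where
  "td_width P N B = Max ((\<lambda>t. frac_edge_cover P (B t)) ` N)"

definition fhw :: "'v query \<Rightarrow> real" where
  "fhw P = Inf {td_width P N B | N E B. is_tree_decomp P N E B}"

definition fhw_union :: "'v query set \<Rightarrow> real" where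
  "fhw_union U = Max (fhw ` U)"

datatype var = X nat | Z nat

definition LW_atom :: "nat \<Rightarrow> nat \<Rightarrow> var set" where
  "LW_atom k i = {X j | j. j \<in> {1..k} \<and> j \<noteq> i}"

definition LW_query :: "nat \<Rightarrow> var query" where
  "LW_query k = map (LW_atom k) [1..<k+1]"

definition mv_component :: "nat \<Rightarrow> (nat \<Rightarrow> var set) \<Rightarrow> (nat \<Rightarrow> nat) \<Rightarrow> var query" where
  "mv_component k A \<sigma> = map (\<lambda>i. {Z j | j. j \<in> {1..i}} \<union> A (\<sigma> i)) [1..<k+1]"

definition mv_extension :: "nat \<Rightarrow> (nat \<Rightarrow> var set) \<Rightarrow> var query set" where
  "mv_extension k A = {mv_component k A \<sigma> | \<sigma>. \<sigma> permutes {1..k}}"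

end

theory Submission
  imports Defs
begin

text \<open>Upper bound: take a tree decomposition with two bags, the last atom of the component and
  the set of all X's together with Z 1, ..., Z (k - 1). Every variable of the second bag lies in
  two of the first, the second-to-last and the last atom, so weight 1/2 on these three atoms
  covers it fractionally.

  Lower bound: the variables Z (k - 1), X (\<sigma> k) and X (\<sigma> (k - 1)) pairwise share an atom, so by
  the Helly property of subtrees of a tree some bag contains all three. Z (k - 1) occurs only in the
  last two atoms, and each of these misses one of the other two variables; adding the three covering
  constraints forces total weight at least 3/2.\<close>

definition induced_edges :: "('n \<times> 'n) set \<Rightarrow> 'n set \<Rightarrow> 'n set set" where
  "induced_edges E S = {{a, b} | a b. (a, b) \<in> E \<and> a \<in> S \<and> b \<in> S}"

lemma finite_induced_edges: "finite S \<Longrightarrow> finite (induced_edges E S)"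
  unfolding induced_edges_def
  by (rule finite_subset[of _ "(\<lambda>(a, b). {a, b}) ` (S \<times> S)"]) auto

lemma induced_edges_mono: "S \<subseteq> T \<Longrightarrow> induced_edges E S \<subseteq> induced_edges E T"
  unfolding induced_edges_def by blast

lemma induced_edges_subset: "e \<in> induced_edges E S \<Longrightarrow> e \<subseteq> S"
  unfolding induced_edges_def by auto

lemma induced_edges_empty [simp]: "induced_edges E {} = {}"
  unfolding induced_edges_def by auto

lemma induced_edges_Int:
  "induced_edges E S \<inter> induced_edges E T = induced_edges E (S \<inter> T)"
  unfolding induced_edges_def by (auto simp: doubleton_eq_iff) blast+

lemma rtrancl_exits_set:
  assumes "(a, b) \<in> R\<^sup>*" "a \<in> S" "b \<notin> S"
  obtains u v where "u \<in> S" "v \<notin> S" "(u, v) \<in> R"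
  using assms by (induction rule: rtrancl_induct) auto

text \<open>Adding to S the outer end of an edge leaving S adds at least that edge.\<close>

lemma connected_card_diff_le_induced_edges_diff:
  assumes "finite W" "connected_in E W" "S \<subseteq> W" "S \<noteq> {}"
  shows "card W - card S \<le> card (induced_edges E W - induced_edges E S)"
  using assms(3,4)
proof (induction "card W - card S" arbitrary: S rule: less_induct)
  case less
  show ?case
  proof (cases "S = W")
    case False
    then obtain s w where "s \<in> S" "w \<in> W - S" using less.prems by blast
    then have "(s, w) \<in> (adj_in E W)\<^sup>*"
      using assms(2) less.prems unfolding connected_in_def by blast
    then obtain u v where uv: "u \<in> S" "v \<notin> S" "(u, v) \<in> adj_in E W"
      using \<open>s \<in> S\<close> \<open>w \<in> W - S\<close> by (blast elim: rtrancl_exits_set)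
    define S' where "S' = insert v S"
    have "v \<in> W" using uv(3) unfolding adj_in_def by auto
    then have S': "S' \<subseteq> W" "card S' = Suc (card S)"
      using less.prems uv(2) finite_subset[OF _ assms(1)] by (auto simp: S'_def)
    have "card W - card S' < card W - card S"
      using S' card_mono[OF assms(1)] by (metis Suc_le_eq diff_less_mono2 lessI)
    then have IH: "card W - card S' \<le> card (induced_edges E W - induced_edges E S')"
      using less.hyps S'(1) by (auto simp: S'_def)
    have "{u, v} \<in> induced_edges E S'"
      using uv by (auto simp: S'_def adj_in_def induced_edges_def insert_commute)
    moreover have "{u, v} \<notin> induced_edges E S"
      using uv(2) induced_edges_subset by blast
    ultimately have "induced_edges E W - induced_edges E S' \<subset> induced_edges E W - induced_edges E S"
      using induced_edges_mono[OF S'(1)] induced_edges_mono[of S S' E]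
      by (auto simp: S'_def)
    then have "card (induced_edges E W - induced_edges E S') < card (induced_edges E W - induced_edges E S)"
      by (meson psubset_card_mono finite_Diff finite_induced_edges assms(1))
    then show ?thesis using IH S'(2) by linarith
  qed simp
qed

lemma connected_card_le_induced_edges:
  assumes "finite T" "connected_in E T"
  shows "card T \<le> card (induced_edges E T) + 1"
proof (cases "T = {}")
  case False
  then obtain v where "v \<in> T" by blast
  then have "card T - 1 \<le> card (induced_edges E T - induced_edges E {v})"
    using connected_card_diff_le_induced_edges_diff[OF assms, of "{v}"] by simp
  also have "\<dots> \<le> card (induced_edges E T)"
    by (rule card_mono) (auto simp: finite_induced_edges assms(1))
  finally show ?thesis by simp
qed simp

lemma tree_card_induced_edges_less:
  assumes "is_tree N E" "S \<subseteq> N" "S \<noteq> {}"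
  shows "card (induced_edges E S) < card S"
proof -
  have N: "finite N" "connected_in E N" "E \<subseteq> N \<times> N"
    using assms(1) unfolding is_tree_def by auto
  then have "induced_edges E N = {{a, b} | a b. (a, b) \<in> E}"
    unfolding induced_edges_def by blast
  then have "card (induced_edges E N) = card N - 1"
    using assms(1) unfolding is_tree_def by simp
  moreover have "card N - card S \<le> card (induced_edges E N - induced_edges E S)"
    using connected_card_diff_le_induced_edges_diff[OF N(1,2) assms(2,3)] .
  moreover have "card (induced_edges E N - induced_edges E S)
      = card (induced_edges E N) - card (induced_edges E S)"
    using finite_induced_edges[OF N(1)] induced_edges_mono[OF assms(2)]
    by (meson card_Diff_subset finite_subset)
  moreover have "card (induced_edges E S) \<le> card (induced_edges E N)"
    using finite_induced_edges[OF N(1)] induced_edges_mono[OF assms(2)] by (rule card_mono)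
  moreover have "0 < card S" "card S \<le> card N"
    using assms(2,3) N(1) by (auto simp: card_gt_0_iff finite_subset card_mono)
  ultimately show ?thesis by linarith
qed

lemma card_Un3:
  assumes "finite A" "finite B" "finite C"
  shows "int (card (A \<union> B \<union> C)) = int (card A) + card B + card C
     - card (A \<inter> B) - card (A \<inter> C) - card (B \<inter> C) + card (A \<inter> B \<inter> C)"
proof -
  have "(A \<union> B) \<inter> C = (A \<inter> C) \<union> (B \<inter> C)" "(A \<inter> C) \<inter> (B \<inter> C) = A \<inter> B \<inter> C"
    by blast+
  then show ?thesis
    using card_Un_Int[of A B] card_Un_Int[of "A \<union> B" C] card_Un_Int[of "A \<inter> C" "B \<inter> C"] assms
    by simp
qed

text \<open>A connected T spans at least |T| - 1 edges, while a nonempty set S of nodes of a tree spans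
  at most |S| - 1. If the three subtrees had no common node, inclusion-exclusion for the nodes and
  for the edges of their union would contradict these bounds.\<close>

lemma tree_Helly3:
  assumes tree: "is_tree N E"
    and sub: "T1 \<subseteq> N" "T2 \<subseteq> N" "T3 \<subseteq> N"
    and conn: "connected_in E T1" "connected_in E T2" "connected_in E T3"
    and meet: "T1 \<inter> T2 \<noteq> {}" "T1 \<inter> T3 \<noteq> {}" "T2 \<inter> T3 \<noteq> {}"
  shows "T1 \<inter> T2 \<inter> T3 \<noteq> {}"
proof
  assume disj: "T1 \<inter> T2 \<inter> T3 = {}"
  let ?U = "T1 \<union> T2 \<union> T3" and ?F = "induced_edges E"
  have fin: "finite T1" "finite T2" "finite T3"
    using sub tree finite_subset unfolding is_tree_def by blast+
  have spans_less: "card (?F S) < card S" if "S \<subseteq> N" "S \<noteq> {}" for S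
    using tree that by (rule tree_card_induced_edges_less)
  have "card (?F ?U) < card ?U" "card (?F (T1 \<inter> T2)) < card (T1 \<inter> T2)"
    "card (?F (T1 \<inter> T3)) < card (T1 \<inter> T3)" "card (?F (T2 \<inter> T3)) < card (T2 \<inter> T3)"
    using sub meet by (auto intro!: spans_less)
  moreover have "card T1 \<le> card (?F T1) + 1" "card T2 \<le> card (?F T2) + 1"
    "card T3 \<le> card (?F T3) + 1"
    using connected_card_le_induced_edges fin conn by simp_all
  moreover have "card (?F T1 \<union> ?F T2 \<union> ?F T3) \<le> card (?F ?U)"
    using induced_edges_mono[of _ ?U E] fin
    by (intro card_mono finite_induced_edges) auto
  moreover have "int (card (?F T1 \<union> ?F T2 \<union> ?F T3)) = int (card (?F T1)) + card (?F T2)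
      + card (?F T3) - card (?F (T1 \<inter> T2)) - card (?F (T1 \<inter> T3)) - card (?F (T2 \<inter> T3))"
    using card_Un3[OF finite_induced_edges finite_induced_edges finite_induced_edges, OF fin]
    by (simp add: induced_edges_Int disj)
  moreover have "int (card ?U) = int (card T1) + card T2 + card T3 - card (T1 \<inter> T2)
      - card (T1 \<inter> T3) - card (T2 \<inter> T3)"
    using card_Un3[OF fin] by (simp add: disj)
  ultimately show False by linarith
qed

lemma tree_decomp_bag_containing_triangle:
  assumes decomp: "is_tree_decomp P N E B"
    and "\<exists>e\<in>set P. {x, y} \<subseteq> e" "\<exists>e\<in>set P. {x, z} \<subseteq> e" "\<exists>e\<in>set P. {y, z} \<subseteq> e"
  obtains t where "t \<in> N" "{x, y, z} \<subseteq> B t"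
proof -
  let ?T = "\<lambda>v. {t \<in> N. v \<in> B t}"
  have tree: "is_tree N E" and conn: "\<And>v. connected_in E (?T v)"
    and cover: "\<And>e. e \<in> set P \<Longrightarrow> \<exists>t\<in>N. e \<subseteq> B t"
    using decomp unfolding is_tree_decomp_def by auto
  have meet: "?T u \<inter> ?T v \<noteq> {}" if "\<exists>e\<in>set P. {u, v} \<subseteq> e" for u v
  proof -
    from that obtain e where "e \<in> set P" "{u, v} \<subseteq> e" by blast
    with cover obtain t where "t \<in> N" "{u, v} \<subseteq> B t" by blast
    then show ?thesis by blast
  qed
  have "?T x \<inter> ?T y \<inter> ?T z \<noteq> {}"
    by (rule tree_Helly3[OF tree _ _ _ conn conn conn]) (use meet assms(2-4) in auto)
  then show ?thesis using that by blast
qed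

lemma connected_in_two_nodes: "S \<subseteq> {a, b} \<Longrightarrow> connected_in {(a, b)} S"
  unfolding connected_in_def adj_in_def by auto

lemma tree_two_nodes: "a \<noteq> b \<Longrightarrow> is_tree {a, b} {(a, b)}"
  unfolding is_tree_def using connected_in_two_nodes[of "{a, b}" a b] by auto

lemma tree_decomp_two_bags:
  assumes "C \<union> D \<subseteq> qvars P" "\<forall>e\<in>set P. e \<subseteq> C \<or> e \<subseteq> D"
  shows "is_tree_decomp P {0, 1} {(0, 1)} (\<lambda>t. if t = 0 then C else D)"
  unfolding is_tree_decomp_def
proof (intro conjI allI ballI)
  show "connected_in {(0, 1)} {t \<in> {0, 1}. x \<in> (if t = 0 then C else D)}" for x
    by (rule connected_in_two_nodes) blast
qed (use assms tree_two_nodes[of "0 :: nat" 1] in auto)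

definition is_frac_cover :: "'v query \<Rightarrow> 'v set \<Rightarrow> (nat \<Rightarrow> real) \<Rightarrow> bool" where
  "is_frac_cover P S w \<longleftrightarrow> (\<forall>i<length P. 0 \<le> w i)
     \<and> (\<forall>x\<in>S. 1 \<le> (\<Sum>i | i < length P \<and> x \<in> P ! i \<inter> S. w i))"

lemma frac_edge_cover_eq_Inf:
  "frac_edge_cover P S = Inf {(\<Sum>i<length P. w i) | w. is_frac_cover P S w}"
  unfolding frac_edge_cover_def is_frac_cover_def ..

lemma frac_edge_cover_le:
  assumes "is_frac_cover P S w"
  shows "frac_edge_cover P S \<le> (\<Sum>i<length P. w i)"
  unfolding frac_edge_cover_eq_Inf
proof (rule cInf_lower)
  show "bdd_below {(\<Sum>i<length P. w i) | w. is_frac_cover P S w}"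
    by (rule bdd_belowI[of _ 0]) (auto simp: is_frac_cover_def intro: sum_nonneg)
qed (use assms in blast)

lemma frac_edge_cover_ge:
  assumes "S \<subseteq> qvars P" "\<And>w. is_frac_cover P S w \<Longrightarrow> c \<le> (\<Sum>i<length P. w i)"
  shows "c \<le> frac_edge_cover P S"
  unfolding frac_edge_cover_eq_Inf
proof (rule cInf_greatest)
  have "is_frac_cover P S (\<lambda>_. 1)"
    unfolding is_frac_cover_def
  proof (intro conjI allI impI ballI)
    fix x assume "x \<in> S"
    then obtain e where "e \<in> set P" "x \<in> e"
      using assms(1) unfolding qvars_def by blast
    then obtain i where "i < length P" "x \<in> P ! i"
      by (auto simp: in_set_conv_nth)
    with \<open>x \<in> S\<close> have "{i. i < length P \<and> x \<in> P ! i \<inter> S} \<noteq> {}" by blast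
    then show "1 \<le> (\<Sum>i | i < length P \<and> x \<in> P ! i \<inter> S. 1 :: real)"
      by (simp add: Suc_leI card_gt_0_iff)
  qed simp
  then show "{(\<Sum>i<length P. w i) | w. is_frac_cover P S w} \<noteq> {}" by blast
qed (use assms(2) in blast)

lemma frac_edge_cover_le_one:
  assumes "j < length P" "S \<subseteq> P ! j"
  shows "frac_edge_cover P S \<le> 1"
proof -
  let ?w = "\<lambda>i. if i = j then 1 else 0 :: real"
  have "is_frac_cover P S ?w"
    unfolding is_frac_cover_def
  proof (intro conjI allI impI ballI)
    fix x assume "x \<in> S"
    then have "j \<in> {i. i < length P \<and> x \<in> P ! i \<inter> S}" using assms by auto
    then show "1 \<le> (\<Sum>i | i < length P \<and> x \<in> P ! i \<inter> S. ?w i)"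
      by simp
  qed simp
  then show ?thesis
    using frac_edge_cover_le[of P S ?w] assms(1) by (simp add: sum.delta)
qed

lemma frac_edge_cover_le_three_halves:
  assumes "a < length P" "b < length P" "c < length P" "distinct [a, b, c]"
    and "S \<subseteq> (P ! a \<inter> P ! b) \<union> (P ! a \<inter> P ! c) \<union> (P ! b \<inter> P ! c)"
  shows "frac_edge_cover P S \<le> 3 / 2"
proof -
  let ?w = "\<lambda>i. if i \<in> {a, b, c} then 1 / 2 else 0 :: real"
  have "is_frac_cover P S ?w"
    unfolding is_frac_cover_def
  proof (intro conjI allI impI ballI)
    fix x assume x: "x \<in> S"
    let ?I = "{i. i < length P \<and> x \<in> P ! i \<inter> S}"
    have "\<exists>i\<in>{a, b, c}. \<exists>j\<in>{a, b, c}. i \<noteq> j \<and> x \<in> P ! i \<and> x \<in> P ! j"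
      using assms(4,5) x by auto
    then obtain i j where ij: "i \<in> {a, b, c}" "j \<in> {a, b, c}" "i \<noteq> j" "x \<in> P ! i" "x \<in> P ! j"
      by blast
    then have "{i, j} \<subseteq> ?I"
      using assms(1-3) x by auto
    then have "sum ?w {i, j} \<le> sum ?w ?I"
      by (intro sum_mono2) auto
    then show "1 \<le> sum ?w ?I"
      using ij(1-3) by simp
  qed simp
  then have "frac_edge_cover P S \<le> (\<Sum>i<length P. ?w i)"
    by (rule frac_edge_cover_le)
  also have "\<dots> = sum ?w {a, b, c}"
    using assms(1-3) by (intro sum.mono_neutral_right) auto
  also have "\<dots> = 3 / 2"
    using assms(4) by simp
  finally show ?thesis .
qed

text \<open>Adding the covering constraints of x, y and z gives 2 W \<ge> 2 + w a + w b \<ge> 3 for the total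
  weight W.\<close>

lemma three_halves_le_frac_edge_cover:
  assumes "S \<subseteq> qvars P" "{x, y, z} \<subseteq> S" "a < length P" "b < length P"
    and "\<And>i. i < length P \<Longrightarrow> x \<in> P ! i \<Longrightarrow> i = a \<or> i = b"
    and "y \<notin> P ! b" "z \<notin> P ! a"
  shows "3 / 2 \<le> frac_edge_cover P S"
proof (rule frac_edge_cover_ge[OF assms(1)])
  fix w assume w: "is_frac_cover P S w"
  let ?W = "\<Sum>i<length P. w i" and ?I = "\<lambda>v. {i. i < length P \<and> v \<in> P ! i \<inter> S}"
  have nonneg: "\<And>i. i \<in> {..<length P} \<Longrightarrow> 0 \<le> w i" using w by (simp add: is_frac_cover_def)
  have "1 \<le> sum w (?I x)" "1 \<le> sum w (?I y)" "1 \<le> sum w (?I z)"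
    using w assms(2) unfolding is_frac_cover_def by blast+
  moreover have "sum w (?I x) \<le> sum w {a, b}"
    using assms(3-5) nonneg by (intro sum_mono2) auto
  moreover have "sum w (?I y) \<le> sum w ({..<length P} - {b})"
    using assms(6) nonneg by (intro sum_mono2) auto
  moreover have "sum w (?I z) \<le> sum w ({..<length P} - {a})"
    using assms(7) nonneg by (intro sum_mono2) auto
  moreover have "sum w {a, b} \<le> w a + w b"
    using nonneg assms(3) by (cases "a = b") auto
  moreover have "sum w ({..<length P} - {a}) = ?W - w a" "sum w ({..<length P} - {b}) = ?W - w b"
    using assms(3,4) by (simp_all add: sum_diff1)
  ultimately show "3 / 2 \<le> ?W"
    by linarith
qed

lemma frac_edge_cover_le_td_width:
  assumes "finite N" "t \<in> N"
  shows "frac_edge_cover P (B t) \<le> td_width P N B"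
  unfolding td_width_def using assms by (intro Max_ge) auto

lemma fhw_eqI:
  assumes "\<And>N E B. is_tree_decomp P N E B \<Longrightarrow> c \<le> td_width P N B"
    and "is_tree_decomp P N E B" "td_width P N B \<le> c"
  shows "fhw P = c"
proof -
  let ?W = "{td_width P N B | N E B. is_tree_decomp P N E B}"
  have "td_width P N B \<in> ?W" using assms(2) by blast
  moreover have "bdd_below ?W" using assms(1) by (intro bdd_belowI[of _ c]) blast
  ultimately have "Inf ?W \<le> c" using assms(3) by (meson cInf_lower order_trans)
  moreover have "c \<le> Inf ?W"
    using \<open>td_width P N B \<in> ?W\<close> assms(1) by (intro cInf_greatest) auto
  ultimately show ?thesis unfolding fhw_def by simp
qed

context
  fixes k :: nat and \<sigma> :: "nat \<Rightarrow> nat"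
  assumes k: "3 \<le> k" and perm: "\<sigma> permutes {1..k}"
begin

abbreviation Q\<sigma> :: "var query" where
  "Q\<sigma> \<equiv> mv_component k (LW_atom k) \<sigma>"

lemma length_component: "length Q\<sigma> = k"
  unfolding mv_component_def by simp

lemma nth_component: "i < k \<Longrightarrow> Q\<sigma> ! i = {Z j | j. j \<in> {1..i + 1}} \<union> LW_atom k (\<sigma> (i + 1))"
  unfolding mv_component_def by (simp del: upt_Suc)

lemma Z_in_component: "i < k \<Longrightarrow> Z j \<in> Q\<sigma> ! i \<longleftrightarrow> 1 \<le> j \<and> j \<le> i + 1"
  by (simp add: nth_component LW_atom_def)

lemma X_in_component: "i < k \<Longrightarrow> X j \<in> Q\<sigma> ! i \<longleftrightarrow> j \<in> {1..k} \<and> j \<noteq> \<sigma> (i + 1)"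
  by (auto simp: nth_component LW_atom_def)

lemma sigma_values:
  "\<sigma> 1 \<in> {1..k}" "\<sigma> (k - 1) \<in> {1..k}" "\<sigma> k \<in> {1..k}" "distinct [\<sigma> 1, \<sigma> (k - 1), \<sigma> k]"
  using k permutes_in_image[OF perm] inj_eq[OF permutes_inj[OF perm]] by auto

lemma three_halves_le_td_width_component:
  assumes decomp: "is_tree_decomp Q\<sigma> N E B"
  shows "3 / 2 \<le> td_width Q\<sigma> N B"
proof -
  let ?x = "Z (k - 1)" and ?y = "X (\<sigma> k)" and ?z = "X (\<sigma> (k - 1))"
  have pos: "0 < k" "k - 2 < k" "k - 1 < k" "k - 2 + 1 = k - 1" "k - 1 + 1 = k"
    using k by auto
  have atoms: "{?x, ?y} \<subseteq> Q\<sigma> ! (k - 2)" "{?x, ?z} \<subseteq> Q\<sigma> ! (k - 1)" "{?y, ?z} \<subseteq> Q\<sigma> ! 0"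
    using pos sigma_values k by (simp_all add: Z_in_component X_in_component)
  have atom_in_set: "Q\<sigma> ! i \<in> set Q\<sigma>" if "i < k" for i
    using that length_component by simp
  have "\<exists>e\<in>set Q\<sigma>. {?x, ?y} \<subseteq> e" "\<exists>e\<in>set Q\<sigma>. {?x, ?z} \<subseteq> e" "\<exists>e\<in>set Q\<sigma>. {?y, ?z} \<subseteq> e"
    using atoms atom_in_set[OF pos(2)] atom_in_set[OF pos(3)] atom_in_set[OF pos(1)] by blast+
  then obtain t where t: "t \<in> N" "{?x, ?y, ?z} \<subseteq> B t"
    by (rule tree_decomp_bag_containing_triangle[OF decomp])
  have "B t \<subseteq> qvars Q\<sigma>" using decomp t(1) unfolding is_tree_decomp_def by blast
  moreover have "i = k - 2 \<or> i = k - 1" if "i < length Q\<sigma>" "?x \<in> Q\<sigma> ! i" for i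
    using that by (auto simp: length_component Z_in_component)
  moreover have "?y \<notin> Q\<sigma> ! (k - 1)" "?z \<notin> Q\<sigma> ! (k - 2)"
    using pos by (simp_all add: X_in_component)
  ultimately have "3 / 2 \<le> frac_edge_cover Q\<sigma> (B t)"
    using t(2) pos(2,3) length_component
    by (intro three_halves_le_frac_edge_cover[of _ _ ?x ?y ?z "k - 2" "k - 1"]) simp_all
  also have "\<dots> \<le> td_width Q\<sigma> N B"
    using decomp t(1)
    by (intro frac_edge_cover_le_td_width) (simp_all add: is_tree_decomp_def is_tree_def)
  finally show ?thesis .
qed

lemma component_two_bag_decomp:
  defines "C \<equiv> {X j | j. j \<in> {1..k}} \<union> {Z j | j. j \<in> {1..k - 1}}"
  shows "is_tree_decomp Q\<sigma> {0, 1} {(0, 1)} (\<lambda>t. if t = 0 then C else Q\<sigma> ! (k - 1))" (is ?decomp)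
    and "td_width Q\<sigma> {0, 1} (\<lambda>t. if t = 0 then C else Q\<sigma> ! (k - 1)) \<le> 3 / 2"
proof -
  have pos: "0 < k" "k - 2 < k" "k - 1 < k" "k - 2 + 1 = k - 1" "k - 1 + 1 = k"
    "distinct [0, k - 2, k - 1]"
    using k by auto
  let ?a = "Q\<sigma> ! 0" and ?b = "Q\<sigma> ! (k - 2)" and ?c = "Q\<sigma> ! (k - 1)"
  have C: "C \<subseteq> (?a \<inter> ?b) \<union> (?a \<inter> ?c) \<union> (?b \<inter> ?c)"
  proof
    fix v assume "v \<in> C"
    then consider (X) j where "v = X j" "j \<in> {1..k}" | (Z) j where "v = Z j" "j \<in> {1..k - 1}"
      unfolding C_def by blast
    then show "v \<in> (?a \<inter> ?b) \<union> (?a \<inter> ?c) \<union> (?b \<inter> ?c)"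
    proof cases
      case X
      then show ?thesis
        using pos(1-5) sigma_values(4) by (simp add: X_in_component) metis
    next
      case Z
      then show ?thesis
        using pos(2-5) by (simp add: Z_in_component) arith
    qed
  qed
  have "Q\<sigma> ! i \<in> set Q\<sigma>" if "i < k" for i
    using that length_component by simp
  then have "C \<union> ?c \<subseteq> qvars Q\<sigma>"
    using C pos unfolding qvars_def by blast
  moreover have "\<forall>e\<in>set Q\<sigma>. e \<subseteq> C \<or> e \<subseteq> ?c"
  proof
    fix e assume "e \<in> set Q\<sigma>"
    then obtain i where i: "i < k" "e = Q\<sigma> ! i"
      using length_component by (auto simp: in_set_conv_nth)
    have "Q\<sigma> ! i \<subseteq> C" if "i < k - 1"
    proof
      fix v assume "v \<in> Q\<sigma> ! i"
      with i that show "v \<in> C"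
        by (cases v) (auto simp: C_def Z_in_component X_in_component)
    qed
    then show "e \<subseteq> C \<or> e \<subseteq> ?c" using i by (cases "i = k - 1") auto
  qed
  ultimately show ?decomp by (rule tree_decomp_two_bags)
  have "frac_edge_cover Q\<sigma> C \<le> 3 / 2"
    using C pos length_component by (intro frac_edge_cover_le_three_halves) auto
  moreover have "frac_edge_cover Q\<sigma> ?c \<le> 1"
    using pos length_component by (intro frac_edge_cover_le_one) auto
  ultimately show "td_width Q\<sigma> {0, 1} (\<lambda>t. if t = 0 then C else ?c) \<le> 3 / 2"
    unfolding td_width_def by simp
qed

lemma fhw_component: "fhw Q\<sigma> = 3 / 2"
  using three_halves_le_td_width_component component_two_bag_decomp by (rule fhw_eqI)

end

theorem mainTheorem9:
  fixes k :: nat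
  assumes "k \<ge> 3"
  shows "fhw_union (mv_extension k (LW_atom k)) = 3 / 2"
proof -
  have "fhw ` mv_extension k (LW_atom k) \<subseteq> {3 / 2}"
    using fhw_component[OF assms] by (auto simp: mv_extension_def)
  moreover have "mv_extension k (LW_atom k) \<noteq> {}"
    unfolding mv_extension_def using permutes_id by blast
  ultimately have "fhw ` mv_extension k (LW_atom k) = {3 / 2}"
    by (simp add: subset_singleton_iff)
  then show ?thesis unfolding fhw_union_def by simp
qed
end
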